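(* There is a homotopy monoid \[ (W,\omega):(\Delta,+,0)\to(\mathbf{Top}_*^{\mathrm{op}},\vee,1) \] with $W(1)=S^1$.
   Context: $\mathbf{Top}_*$ is the category of based (compactly generated Hausdorff) spaces and basepoint-preserving maps; $\vee$ is the wedge sum and $1$ the one-point space. $(\mathbf{Top}_*^{\mathrm{op}},\vee,1)$ is the opposite category with monoidal structure given by $\vee$ and $1$ (which are product and terminal object there), and its equivalences are the (based) homotopy equivalences. $\Delta$: objects $n=\{0,\dots,n-1\}$ ($n\ge0$), order-preserving maps, monoidal under ordinal sum $+$ with unit $0$. A homotopy monoid in a monoidal category with equivalences $(\mathcal{M},\otimes,I)$ is a colax monoidal functor $(W,\omega):(\Delta,+,0)\to\mathcal{M}$ — a functor $W$ with maps $\omega_{m,n}:W(m+n)\to W(m)\otimes W(n)$ natural in $m,n$ and $\omega_0:W(0)\to I$, satisfying the coassociativity and counit axioms of a monoidal functor but not required to be invertible — such that $\omega_0$ and every $\omega_{m,n}$ are equivalences. *)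

theory Defs
  imports "HOL-Analysis.Analysis" "HOL-Library.FuncSet"
begin

text \<open>A based space is a topology X together with a basepoint in its carrier.
  Objects of Top_* are required to be compactly generated Hausdorff spaces.\<close>

definition cgh_based :: "'a topology \<Rightarrow> 'a \<Rightarrow> bool" where
  "cgh_based X x0 \<longleftrightarrow> x0 \<in> topspace X \<and> k_space X \<and> Hausdorff_space X"

definition based_map :: "'a topology \<Rightarrow> 'a \<Rightarrow> 'b topology \<Rightarrow> 'b \<Rightarrow> ('a \<Rightarrow> 'b) \<Rightarrow> bool" where
  "based_map X x0 Y y0 f \<longleftrightarrow> continuous_map X Y f \<and> f x0 = y0"

definition based_homotopic ::
  "'a topology \<Rightarrow> 'a \<Rightarrow> 'b topology \<Rightarrow> 'b \<Rightarrow> ('a \<Rightarrow> 'b) \<Rightarrow> ('a \<Rightarrow> 'b) \<Rightarrow> bool" where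
  "based_homotopic X x0 Y y0 f g \<longleftrightarrow> homotopic_with (\<lambda>h. h x0 = y0) X Y f g"

text \<open>Based homotopy equivalence (the equivalences of Top_*, hence also of its opposite).\<close>
definition based_homotopy_equivalence ::
  "'a topology \<Rightarrow> 'a \<Rightarrow> 'b topology \<Rightarrow> 'b \<Rightarrow> ('a \<Rightarrow> 'b) \<Rightarrow> bool" where
  "based_homotopy_equivalence X x0 Y y0 f \<longleftrightarrow>
     based_map X x0 Y y0 f \<and>
     (\<exists>g. based_map Y y0 X x0 g \<and>
          based_homotopic X x0 X x0 (g \<circ> f) id \<and>
          based_homotopic Y y0 Y y0 (f \<circ> g) id)"

text \<open>The wedge X \<or> Y of based spaces (X,a), (Y,b) is realised on the type 'a + 'b:
  its points are Inl x (x in X) and Inr y (y in Y, y \<noteq> b); the basepoint is Inl a,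
  which is the identification of a and b. The topology is the quotient topology of
  the disjoint union under the identification map wedge_norm.\<close>

definition wedge_norm :: "'a \<Rightarrow> 'b \<Rightarrow> 'a + 'b \<Rightarrow> 'a + 'b" where
  "wedge_norm a b z = (case z of Inl x \<Rightarrow> Inl x | Inr y \<Rightarrow> (if y = b then Inl a else Inr y))"

definition wedge_carrier :: "'a topology \<Rightarrow> 'a \<Rightarrow> 'b topology \<Rightarrow> 'b \<Rightarrow> ('a + 'b) set" where
  "wedge_carrier X a Y b = Inl ` topspace X \<union> Inr ` (topspace Y - {b})"

definition wedge :: "'a topology \<Rightarrow> 'a \<Rightarrow> 'b topology \<Rightarrow> 'b \<Rightarrow> ('a + 'b) topology" where
  "wedge X a Y b = topology (\<lambda>U. U \<subseteq> wedge_carrier X a Y b \<and>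
       openin X {x \<in> topspace X. Inl x \<in> U} \<and>
       openin Y {y \<in> topspace Y. wedge_norm a b (Inr y) \<in> U})"

definition wedge_map :: "'c \<Rightarrow> 'd \<Rightarrow> ('a \<Rightarrow> 'c) \<Rightarrow> ('b \<Rightarrow> 'd) \<Rightarrow> 'a + 'b \<Rightarrow> 'c + 'd" where
  "wedge_map a' b' f g z = wedge_norm a' b' (map_sum f g z)"

definition wedge_assoc :: "('a + 'b) + 'c \<Rightarrow> 'a + ('b + 'c)" where
  "wedge_assoc z = (case z of Inl (Inl x) \<Rightarrow> Inl x | Inl (Inr y) \<Rightarrow> Inr (Inl y) | Inr w \<Rightarrow> Inr (Inr w))"

definition one_point :: "unit topology" where
  "one_point = discrete_topology {()}"

text \<open>A morphism m \<rightarrow> n of Delta (n = {0,...,n-1}) is an order-preserving map,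
  represented as an extensional function on {..<m}.\<close>
definition Delta_hom :: "nat \<Rightarrow> nat \<Rightarrow> (nat \<Rightarrow> nat) set" where
  "Delta_hom m n = {f \<in> {..<m} \<rightarrow>\<^sub>E {..<n}. mono_on {..<m} f}"

definition Delta_id :: "nat \<Rightarrow> nat \<Rightarrow> nat" where
  "Delta_id n = restrict id {..<n}"

definition Delta_comp :: "nat \<Rightarrow> (nat \<Rightarrow> nat) \<Rightarrow> (nat \<Rightarrow> nat) \<Rightarrow> nat \<Rightarrow> nat" where
  "Delta_comp l g f = compose {..<l} g f"

definition Delta_sum :: "nat \<Rightarrow> nat \<Rightarrow> nat \<Rightarrow> (nat \<Rightarrow> nat) \<Rightarrow> (nat \<Rightarrow> nat) \<Rightarrow> nat \<Rightarrow> nat" where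
  "Delta_sum m m' n f g = restrict (\<lambda>i. if i < m then f i else n + g (i - m)) {..<m + m'}"

text \<open>A functor W : Delta \<rightarrow> Top_*^op, i.e. a contravariant functor Delta \<rightarrow> Top_*:
  objects (W n, bp n); on a morphism f : m \<rightarrow> n, Wm m n f : W n \<rightarrow> W m.
  Colax structure maps in Top_*^op, \<omega>_{m,n} : W(m+n) \<rightarrow> W m \<or> W n, are based maps
  om m n : W m \<or> W n \<rightarrow> W (m+n) in Top_*; \<omega>_0 : W 0 \<rightarrow> 1 in Top_*^op is the
  (unique) based map 1 \<rightarrow> W 0, i.e. the inclusion of the basepoint.
  Equality of morphisms of Top_* is equality of functions on the carrier.\<close>

definition homotopy_monoid_Topop ::
  "(nat \<Rightarrow> 'a topology) \<Rightarrow> (nat \<Rightarrow> 'a) \<Rightarrow> (nat \<Rightarrow> nat \<Rightarrow> (nat \<Rightarrow> nat) \<Rightarrow> 'a \<Rightarrow> 'a)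
    \<Rightarrow> (nat \<Rightarrow> nat \<Rightarrow> 'a + 'a \<Rightarrow> 'a) \<Rightarrow> bool" where
  "homotopy_monoid_Topop W bp Wm om \<longleftrightarrow>
    \<comment> \<open>objects\<close>
    (\<forall>n. cgh_based (W n) (bp n)) \<and>
    \<comment> \<open>functor on morphisms\<close>
    (\<forall>m n f. f \<in> Delta_hom m n \<longrightarrow> based_map (W n) (bp n) (W m) (bp m) (Wm m n f)) \<and>
    (\<forall>n. \<forall>x \<in> topspace (W n). Wm n n (Delta_id n) x = x) \<and>
    (\<forall>l m n f g. f \<in> Delta_hom l m \<longrightarrow> g \<in> Delta_hom m n \<longrightarrow>
       (\<forall>x \<in> topspace (W n). Wm l n (Delta_comp l g f) x = Wm l m f (Wm m n g x))) \<and>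
    \<comment> \<open>structure maps \<omega>_{m,n}\<close>
    (\<forall>m n. based_map (wedge (W m) (bp m) (W n) (bp n)) (Inl (bp m)) (W (m + n)) (bp (m + n)) (om m n)) \<and>
    \<comment> \<open>naturality in m and n\<close>
    (\<forall>m m' n n' f g. f \<in> Delta_hom m m' \<longrightarrow> g \<in> Delta_hom n n' \<longrightarrow>
       (\<forall>z \<in> topspace (wedge (W m') (bp m') (W n') (bp n')).
          Wm (m + n) (m' + n') (Delta_sum m n m' f g) (om m' n' z) =
          om m n (wedge_map (bp m) (bp n) (Wm m m' f) (Wm n n' g) z))) \<and>
    \<comment> \<open>coassociativity\<close>
    (\<forall>l m n. \<forall>z \<in> topspace (wedge (wedge (W l) (bp l) (W m) (bp m)) (Inl (bp l)) (W n) (bp n)).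
       om (l + m) n (wedge_map (bp (l + m)) (bp n) (om l m) id z) =
       om l (m + n) (wedge_map (bp l) (bp (m + n)) id (om m n) (wedge_assoc z))) \<and>
    \<comment> \<open>counit laws (left and right)\<close>
    (\<forall>n. \<forall>x \<in> topspace (W n). om 0 n (wedge_norm (bp 0) (bp n) (Inr x)) = x) \<and>
    (\<forall>n. \<forall>x \<in> topspace (W n). om n 0 (Inl x) = x) \<and>
    \<comment> \<open>homotopy monoid: all structure maps are equivalences\<close>
    based_homotopy_equivalence one_point () (W 0) (bp 0) (\<lambda>_. bp 0) \<and>
    (\<forall>m n. based_homotopy_equivalence (wedge (W m) (bp m) (W n) (bp n)) (Inl (bp m))
              (W (m + n)) (bp (m + n)) (om m n))"

end

theory Submission
  imports Defs
begin

text \<open>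
  Let W(k) be the simplex {0 <= t_0 <= ... <= t_(k-1) <= 1} with its k + 1 vertices (the points all
  of whose coordinates lie in {0, 1}) collapsed to the base point. It is realised inside the k-torus
  as the image of t |-> (exp (2 pi i t_j))_j, so W(1) is the circle. An order-preserving f : m -> n
  acts contravariantly by t |-> t o f, and omega(m,n) : W(m) v W(n) -> W(m + n) includes W(m) as the
  front face (t, 1, ..., 1) and W(n) as the back face (0, ..., 0, t'); naturality, coassociativity
  and the counit laws are then identities between coordinate tuples. The map omega(m,n) is a
  homotopy equivalence: moving the first m coordinates down and the last n up by
  min (t_(m-1), 1 - t_m) deforms W(m + n) into the union of the two faces, which is W(m) v W(n).
  Since all W(k) must live on one carrier type, torus points are coded injectively by complex
  numbers, using |C x C| = |C|.
\<close>

lemma istopology_coinduced: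
  "istopology (\<lambda>U. U \<subseteq> S \<and> openin X {x \<in> topspace X. f x \<in> U} \<and> openin Y {y \<in> topspace Y. g y \<in> U})"
proof -
  have "{x \<in> topspace X. f x \<in> A \<inter> B} = {x \<in> topspace X. f x \<in> A} \<inter> {x \<in> topspace X. f x \<in> B}"
    "{y \<in> topspace Y. g y \<in> A \<inter> B} = {y \<in> topspace Y. g y \<in> A} \<inter> {y \<in> topspace Y. g y \<in> B}"
    "{x \<in> topspace X. f x \<in> \<Union>K} = (\<Union>A\<in>K. {x \<in> topspace X. f x \<in> A})"
    "{y \<in> topspace Y. g y \<in> \<Union>K} = (\<Union>A\<in>K. {y \<in> topspace Y. g y \<in> A})"
    for A B K
    by auto
  then show ?thesis
    by (simp only: istopology_def) (blast intro: openin_Int openin_Union)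
qed

lemma openin_wedge:
  "openin (wedge X a Y b) U \<longleftrightarrow> U \<subseteq> wedge_carrier X a Y b \<and>
     openin X {x \<in> topspace X. Inl x \<in> U} \<and> openin Y {y \<in> topspace Y. wedge_norm a b (Inr y) \<in> U}"
  using topology_inverse'[OF istopology_coinduced[of "wedge_carrier X a Y b" X Inl Y "\<lambda>y. wedge_norm a b (Inr y)"]]
  unfolding wedge_def by simp

lemma wedge_norm_Inl [simp]: "wedge_norm a b (Inl x) = Inl x"
  by (simp add: wedge_norm_def)

lemma wedge_norm_Inr: "wedge_norm a b (Inr y) = (if y = b then Inl a else Inr y)"
  by (simp add: wedge_norm_def)

lemma topspace_wedge:
  assumes "a \<in> topspace X"
  shows "topspace (wedge X a Y b) = wedge_carrier X a Y b"
proof -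
  have "{x \<in> topspace X. Inl x \<in> wedge_carrier X a Y b} = topspace X"
    "{y \<in> topspace Y. wedge_norm a b (Inr y) \<in> wedge_carrier X a Y b} = topspace Y"
    using assms by (auto simp: wedge_carrier_def wedge_norm_Inr)
  then have "openin (wedge X a Y b) (wedge_carrier X a Y b)"
    by (simp add: openin_wedge)
  then have "wedge_carrier X a Y b \<subseteq> topspace (wedge X a Y b)"
    by (rule openin_subset)
  moreover have "topspace (wedge X a Y b) \<subseteq> wedge_carrier X a Y b"
    using openin_topspace[of "wedge X a Y b"] unfolding openin_wedge by (elim conjE)
  ultimately show ?thesis
    by blast
qed

lemma continuous_map_from_wedge:
  assumes a: "a \<in> topspace X"
    and f: "continuous_map X Z (\<lambda>x. h (Inl x))"
    and g: "continuous_map Y Z (\<lambda>y. h (wedge_norm a b (Inr y)))"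
  shows "continuous_map (wedge X a Y b) Z h"
  unfolding continuous_map_def
proof (intro conjI allI impI)
  have "h (Inr y) \<in> topspace Z" if "y \<in> topspace Y" "y \<noteq> b" for y
    using that continuous_map_image_subset_topspace[OF g] by (auto simp: wedge_norm_Inr)
  with f show "h \<in> topspace (wedge X a Y b) \<rightarrow> topspace Z"
    by (auto simp: topspace_wedge[OF a] wedge_carrier_def continuous_map_def)
  fix U
  assume U: "openin Z U"
  have "{x \<in> topspace X. Inl x \<in> {z \<in> topspace (wedge X a Y b). h z \<in> U}} = {x \<in> topspace X. h (Inl x) \<in> U}"
    "{y \<in> topspace Y. wedge_norm a b (Inr y) \<in> {z \<in> topspace (wedge X a Y b). h z \<in> U}} =
       {y \<in> topspace Y. h (wedge_norm a b (Inr y)) \<in> U}"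
    using a by (auto simp: topspace_wedge wedge_carrier_def wedge_norm_Inr)
  with openin_continuous_map_preimage[OF f U] openin_continuous_map_preimage[OF g U]
  show "openin (wedge X a Y b) {z \<in> topspace (wedge X a Y b). h z \<in> U}"
    unfolding openin_wedge topspace_wedge[OF a] by auto
qed

lemma continuous_map_Inl_wedge:
  assumes "a \<in> topspace X"
  shows "continuous_map X (wedge X a Y b) Inl"
  unfolding continuous_map_def openin_wedge topspace_wedge[OF assms]
  by (auto simp: wedge_carrier_def)

lemma continuous_map_Inr_wedge:
  assumes "a \<in> topspace X"
  shows "continuous_map Y (wedge X a Y b) (\<lambda>y. wedge_norm a b (Inr y))"
  unfolding continuous_map_def openin_wedge topspace_wedge[OF assms]
  using assms by (auto simp: wedge_carrier_def wedge_norm_Inr)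

definition quotient_topology :: "'a topology \<Rightarrow> ('a \<Rightarrow> 'b) \<Rightarrow> 'b topology" where
  "quotient_topology X f = topology (\<lambda>U. U \<subseteq> f ` topspace X \<and> openin X {x \<in> topspace X. f x \<in> U})"

lemma openin_quotient_topology:
  "openin (quotient_topology X f) U \<longleftrightarrow> U \<subseteq> f ` topspace X \<and> openin X {x \<in> topspace X. f x \<in> U}"
  using topology_inverse'[OF istopology_coinduced[of "f ` topspace X" X f X f]]
  unfolding quotient_topology_def by simp

lemma topspace_quotient_topology [simp]: "topspace (quotient_topology X f) = f ` topspace X"
proof -
  have "{x \<in> topspace X. f x \<in> f ` topspace X} = topspace X"
    by auto
  then have "f ` topspace X \<subseteq> topspace (quotient_topology X f)"
    by (intro openin_subset) (simp add: openin_quotient_topology)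
  moreover have "topspace (quotient_topology X f) \<subseteq> f ` topspace X"
    using openin_topspace[of "quotient_topology X f"] unfolding openin_quotient_topology by (elim conjE)
  ultimately show ?thesis
    by blast
qed

lemma quotient_map_quotient_topology: "quotient_map X (quotient_topology X f) f"
  unfolding quotient_map_def openin_quotient_topology topspace_quotient_topology by blast

lemma continuous_map_from_quotient_topology:
  assumes "continuous_map X Z g" and "\<And>x. x \<in> topspace X \<Longrightarrow> h (f x) = g x"
  shows "continuous_map (quotient_topology X f) Z h"
  using assms by (intro continuous_compose_quotient_map[OF quotient_map_quotient_topology])
    (auto elim: continuous_map_eq)

lemma quotient_topology_unique:
  assumes "quotient_map X Y f"
  shows "quotient_topology X f = Y"
proof -
  have "openin (quotient_topology X f) U \<longleftrightarrow> openin Y U" for U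
    using assms openin_subset[of Y U]
    unfolding quotient_map_def openin_quotient_topology by blast
  then show ?thesis
    by (simp add: topology_eq)
qed

lemma based_homotopic_quotient_lift:
  assumes q: "quotient_map X Y q" and y0: "y0 \<in> topspace Y"
    and h: "continuous_map (prod_topology (top_of_set {0..1::real}) X) Z h"
    and fibre: "\<And>t x x'. \<lbrakk>t \<in> {0..1}; x \<in> topspace X; x' \<in> topspace X; q x = q x'\<rbrakk>
      \<Longrightarrow> h (t, x) = h (t, x')"
    and h0: "\<And>x. x \<in> topspace X \<Longrightarrow> h (0, x) = f (q x)"
    and h1: "\<And>x. x \<in> topspace X \<Longrightarrow> h (1, x) = g (q x)"
    and base: "\<And>t x. \<lbrakk>t \<in> {0..1}; x \<in> topspace X; q x = y0\<rbrakk> \<Longrightarrow> h (t, x) = z0"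
  shows "based_homotopic Y y0 Z z0 f g"
proof -
  let ?I = "top_of_set {0..1::real}"
  have Q: "quotient_map (prod_topology ?I X) (prod_topology ?I Y) (\<lambda>(t, x). (t, q x))"
    using q by (intro quotient_map_prod_right compact_imp_locally_compact_space)
      (auto simp: Hausdorff_space_subtopology compact_space_subtopology)
  obtain k where k: "continuous_map (prod_topology ?I Y) Z k"
    and kh: "\<And>p. p \<in> topspace (prod_topology ?I X) \<Longrightarrow> k ((\<lambda>(t, x). (t, q x)) p) = h p"
  proof (rule quotient_map_lift_exists[OF Q h])
    show "h p = h p'" if "p \<in> topspace (prod_topology ?I X)" "p' \<in> topspace (prod_topology ?I X)"
      and "(\<lambda>(t, x). (t, q x)) p = (\<lambda>(t, x). (t, q x)) p'" for p p'
      using that fibre[of "fst p" "snd p" "snd p'"] by (cases p, cases p') auto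
  qed blast
  have lift: "\<exists>x \<in> topspace X. q x = y" if "y \<in> topspace Y" for y
    using quotient_imp_surjective_map[OF q] that by (metis imageE)
  show ?thesis
    unfolding based_homotopic_def
  proof (rule homotopic_with[THEN iffD2])
    show "(\<And>y. y \<in> topspace Y \<Longrightarrow> u y = v y) \<Longrightarrow> u y0 = z0 \<longleftrightarrow> v y0 = z0" for u v
      using y0 by simp
    have "k (0, y) = f y" "k (1, y) = g y" if "y \<in> topspace Y" for y
      using lift[OF that] kh[of "(0, _)"] kh[of "(1, _)"] h0 h1 by auto
    moreover have "k (t, y0) = z0" if "t \<in> {0..1}" for t
      using lift[OF y0] kh[of "(t, _)"] base that by auto
    ultimately show "\<exists>k. continuous_map (prod_topology ?I Y) Z k \<and> (\<forall>y \<in> topspace Y. k (0, y) = f y) \<and>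
        (\<forall>y \<in> topspace Y. k (1, y) = g y) \<and> (\<forall>t \<in> {0..1}. k (t, y0) = z0)"
      using k by blast
  qed
qed

lemma based_homotopy_equivalence_retraction:
  assumes i: "based_map X x0 Y y0 i" and r: "based_map Y y0 X x0 r"
    and ri: "\<And>x. x \<in> topspace X \<Longrightarrow> r (i x) = x"
    and ir: "based_homotopic Y y0 Y y0 (i \<circ> r) id"
  shows "based_homotopy_equivalence X x0 Y y0 i"
  unfolding based_homotopy_equivalence_def
proof (intro conjI exI)
  show "based_homotopic X x0 X x0 (r \<circ> i) id"
    unfolding based_homotopic_def
    using i r ri by (intro homotopic_with_equal) (auto simp: based_map_def continuous_map_compose)
qed (fact i r ir)+

lemma based_homotopy_equivalence_one_point:
  assumes "topspace Y = {y0}"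
  shows "based_homotopy_equivalence one_point () Y y0 (\<lambda>_. y0)"
proof (rule based_homotopy_equivalence_retraction)
  show "based_map one_point () Y y0 (\<lambda>_. y0)" "based_map Y y0 one_point () (\<lambda>_. ())"
    using assms by (auto simp: based_map_def one_point_def)
  show "based_homotopic Y y0 Y y0 ((\<lambda>_. y0) \<circ> (\<lambda>_. ())) id"
    unfolding based_homotopic_def using assms by (intro homotopic_with_equal) auto
qed simp

section \<open>Coding tuples by complex numbers\<close>

definition pair_code :: "complex \<times> complex \<Rightarrow> complex" where
  "pair_code = (SOME f. inj f)"

lemma inj_pair_code: "inj pair_code"
proof -
  have "\<exists>f :: complex \<times> complex \<Rightarrow> complex. bij_betw f UNIV UNIV"
    using card_of_ordIso card_of_Times_same_infinite[OF infinite_UNIV_char_0] by fastforce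
  then have "\<exists>f :: complex \<times> complex \<Rightarrow> complex. inj f"
    using bij_betw_imp_inj_on by blast
  then show ?thesis
    unfolding pair_code_def by (rule someI_ex)
qed

primrec nested_pair_code :: "nat \<Rightarrow> (nat \<Rightarrow> complex) \<Rightarrow> complex" where
  "nested_pair_code 0 x = 0"
| "nested_pair_code (Suc k) x = pair_code (x k, nested_pair_code k x)"

text \<open>Single coordinates are coded by themselves, so that the one-dimensional piece is literally
  the unit circle.\<close>
definition tuple_code :: "nat \<Rightarrow> (nat \<Rightarrow> complex) \<Rightarrow> complex" where
  "tuple_code k x = (if k = 1 then x 0 else nested_pair_code k x)"

definition tuple_decode :: "nat \<Rightarrow> complex \<Rightarrow> nat \<Rightarrow> complex" where
  "tuple_decode k = inv_into (extensional {..<k}) (tuple_code k)"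

lemma nested_pair_code_eqD: "nested_pair_code k x = nested_pair_code k y \<Longrightarrow> i < k \<Longrightarrow> x i = y i"
  by (induction k) (auto simp: less_Suc_eq inj_eq[OF inj_pair_code])

lemma inj_on_tuple_code: "inj_on (tuple_code k) (extensional {..<k})"
proof (rule inj_onI)
  fix x y
  assume x: "x \<in> extensional {..<k}" and y: "y \<in> extensional {..<k}"
    and code: "tuple_code k x = tuple_code k y"
  have "x i = y i" if "i < k" for i
    using code that nested_pair_code_eqD[of k x y i] by (cases "k = 1") (simp_all add: tuple_code_def)
  with x y show "x = y"
    by (intro extensionalityI[of _ "{..<k}"]) auto
qed

lemma tuple_decode_code [simp]: "x \<in> extensional {..<k} \<Longrightarrow> tuple_decode k (tuple_code k x) = x"
  unfolding tuple_decode_def by (rule inv_into_f_f[OF inj_on_tuple_code])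

lemma tuple_code_cong:
  "(\<And>i. i < k \<Longrightarrow> x i = y i) \<Longrightarrow> tuple_code k (restrict x {..<k}) = tuple_code k (restrict y {..<k})"
  by (metis lessThan_iff restrict_ext)

section \<open>The simplex with collapsed vertices\<close>

lemma cis_2pi_eq_cases:
  assumes a: "a \<in> {0..1}" and b: "b \<in> {0..1}" and eq: "cis (2 * pi * a) = cis (2 * pi * b)"
  shows "a = b \<or> a \<in> {0, 1} \<and> b \<in> {0, 1}"
proof -
  obtain n :: int where "\<i> * of_real (2 * pi * a) = \<i> * of_real (2 * pi * b) + of_int (2 * n) * pi * \<i>"
    using eq unfolding cis_conv_exp exp_eq by blast
  then have "2 * pi * a = 2 * pi * (b + n)"
    by (auto simp: complex_eq_iff algebra_simps)
  then have "a = b + n"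
    by simp
  moreover have "n \<in> {-1, 0, 1}"
    using a b calculation by auto
  ultimately show ?thesis
    using a b by auto
qed

definition ordered_simplex :: "nat \<Rightarrow> (nat \<Rightarrow> real) set" where
  "ordered_simplex k = {\<theta> \<in> {..<k} \<rightarrow>\<^sub>E {0..1}. mono_on {..<k} \<theta>}"

definition ordered_simplex_topology :: "nat \<Rightarrow> (nat \<Rightarrow> real) topology" where
  "ordered_simplex_topology k = subtopology (product_topology (\<lambda>_. euclideanreal) {..<k}) (ordered_simplex k)"

definition simplex_vertex :: "nat \<Rightarrow> (nat \<Rightarrow> real) \<Rightarrow> bool" where
  "simplex_vertex k \<theta> \<longleftrightarrow> (\<forall>i<k. \<theta> i \<in> {0, 1})"

definition collapse :: "nat \<Rightarrow> (nat \<Rightarrow> real) \<Rightarrow> complex" where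
  "collapse k \<theta> = tuple_code k (\<lambda>i\<in>{..<k}. cis (2 * pi * \<theta> i))"

definition collapsed_simplex :: "nat \<Rightarrow> complex topology" where
  "collapsed_simplex k = quotient_topology (ordered_simplex_topology k) (collapse k)"

definition collapsed_vertex :: "nat \<Rightarrow> complex" where
  "collapsed_vertex k = collapse k (\<lambda>i\<in>{..<k}. 0)"

lemma ordered_simplexI:
  assumes "\<theta> \<in> extensional {..<k}" and "\<And>i. i < k \<Longrightarrow> 0 \<le> \<theta> i \<and> \<theta> i \<le> 1"
    and "\<And>i j. i \<le> j \<Longrightarrow> j < k \<Longrightarrow> \<theta> i \<le> \<theta> j"
  shows "\<theta> \<in> ordered_simplex k"
  using assms by (auto simp: ordered_simplex_def PiE_iff mono_on_def)

lemma ordered_simplex_extensional: "\<theta> \<in> ordered_simplex k \<Longrightarrow> \<theta> \<in> extensional {..<k}"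
  by (simp add: ordered_simplex_def PiE_iff)

lemma ordered_simplex_bounds: "\<theta> \<in> ordered_simplex k \<Longrightarrow> i < k \<Longrightarrow> 0 \<le> \<theta> i \<and> \<theta> i \<le> 1"
  by (auto simp: ordered_simplex_def PiE_iff)

lemma ordered_simplex_mono: "\<theta> \<in> ordered_simplex k \<Longrightarrow> i \<le> j \<Longrightarrow> j < k \<Longrightarrow> \<theta> i \<le> \<theta> j"
  by (auto simp: ordered_simplex_def mono_on_def)

lemma zero_in_ordered_simplex: "(\<lambda>i\<in>{..<k}. 0) \<in> ordered_simplex k"
  by (rule ordered_simplexI) auto

lemma tuple_decode_collapse [simp]: "tuple_decode k (collapse k \<theta>) = (\<lambda>i\<in>{..<k}. cis (2 * pi * \<theta> i))"
  by (simp add: collapse_def)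

lemma collapse_eq_iff: "collapse k \<theta> = collapse k \<theta>' \<longleftrightarrow> (\<forall>i<k. cis (2 * pi * \<theta> i) = cis (2 * pi * \<theta>' i))"
  unfolding collapse_def inj_on_eq_iff[OF inj_on_tuple_code restrict_extensional restrict_extensional]
proof
  assume eq: "(\<lambda>i\<in>{..<k}. cis (2 * pi * \<theta> i)) = (\<lambda>i\<in>{..<k}. cis (2 * pi * \<theta>' i))"
  show "\<forall>i<k. cis (2 * pi * \<theta> i) = cis (2 * pi * \<theta>' i)"
  proof (intro allI impI)
    fix i :: nat
    assume "i < k"
    then show "cis (2 * pi * \<theta> i) = cis (2 * pi * \<theta>' i)"
      using fun_cong[OF eq, of i] by simp
  qed
qed (auto intro: restrict_ext)

lemma collapse_vertex: "simplex_vertex k \<theta> \<Longrightarrow> collapse k \<theta> = collapsed_vertex k"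
  unfolding collapsed_vertex_def collapse_eq_iff simplex_vertex_def
  by (auto simp: cis_multiple_2pi[of 1, simplified])

lemma collapse_eq_cases:
  assumes \<theta>: "\<theta> \<in> ordered_simplex k" and \<theta>': "\<theta>' \<in> ordered_simplex k"
    and eq: "collapse k \<theta> = collapse k \<theta>'"
  shows "\<theta> = \<theta>' \<or> simplex_vertex k \<theta> \<and> simplex_vertex k \<theta>'"
proof -
  have coord: "\<theta> i = \<theta>' i \<or> \<theta> i \<in> {0, 1} \<and> \<theta>' i \<in> {0, 1}" if "i < k" for i
    using eq that ordered_simplex_bounds[OF \<theta> that] ordered_simplex_bounds[OF \<theta>' that]
    by (intro cis_2pi_eq_cases) (auto simp: collapse_eq_iff)
  show ?thesis
  proof (cases "simplex_vertex k \<theta>")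
    case True
    have "\<theta>' i \<in> {0, 1}" if "i < k" for i
      using True coord[OF that] that by (auto simp: simplex_vertex_def)
    with True show ?thesis
      by (simp add: simplex_vertex_def)
  next
    case False
    then obtain i where i: "i < k" "0 < \<theta> i" "\<theta> i < 1"
      using ordered_simplex_bounds[OF \<theta>] by (force simp: simplex_vertex_def)
    then have "\<theta>' i = \<theta> i"
      using coord by force
    have "\<theta> j = \<theta>' j" if j: "j < k" for j
    proof (cases "j \<le> i")
      case True
      then have "\<theta> j < 1" "\<theta>' j < 1"
        using ordered_simplex_mono[OF \<theta> True i(1)] ordered_simplex_mono[OF \<theta>' True i(1)] i \<open>\<theta>' i = \<theta> i\<close>
        by auto
      then show ?thesis
        using coord[OF j] by auto
    next
      case False
      then have "0 < \<theta> j" "0 < \<theta>' j"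
        using ordered_simplex_mono[OF \<theta> _ j, of i] ordered_simplex_mono[OF \<theta>' _ j, of i] i \<open>\<theta>' i = \<theta> i\<close>
        by auto
      then show ?thesis
        using coord[OF j] by auto
    qed
    then show ?thesis
      using ordered_simplex_extensional[OF \<theta>] ordered_simplex_extensional[OF \<theta>'] by (auto intro: extensionalityI)
  qed
qed

lemma collapse_eq_collapsed_vertexD:
  assumes "\<theta> \<in> ordered_simplex k" and "collapse k \<theta> = collapsed_vertex k"
  shows "simplex_vertex k \<theta>"
proof -
  have "collapse k \<theta> = collapse k (\<lambda>i\<in>{..<k}. 0)"
    using assms(2) by (simp add: collapsed_vertex_def collapse_eq_iff)
  then show ?thesis
    using collapse_eq_cases[OF assms(1) zero_in_ordered_simplex] by (auto simp: simplex_vertex_def)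
qed

lemma topspace_ordered_simplex_topology [simp]: "topspace (ordered_simplex_topology k) = ordered_simplex k"
  by (auto simp: ordered_simplex_topology_def ordered_simplex_def)

lemma continuous_map_ordered_simplex_coordinate:
  "i < k \<Longrightarrow> continuous_map (ordered_simplex_topology k) euclideanreal (\<lambda>\<theta>. \<theta> i)"
  unfolding ordered_simplex_topology_def
  by (intro continuous_map_from_subtopology continuous_map_product_projection) simp

lemma continuous_map_into_ordered_simplex_topology:
  assumes "\<And>x. x \<in> topspace X \<Longrightarrow> g x \<in> ordered_simplex k"
    and "\<And>i. i < k \<Longrightarrow> continuous_map X euclideanreal (\<lambda>x. g x i)"
  shows "continuous_map X (ordered_simplex_topology k) g"
  unfolding ordered_simplex_topology_def continuous_map_in_subtopology continuous_map_componentwise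
  using assms ordered_simplex_extensional by auto

lemma compact_space_ordered_simplex_topology: "compact_space (ordered_simplex_topology k)"
proof -
  let ?P = "product_topology (\<lambda>_. euclideanreal) {..<k}" and ?K = "{..<k} \<rightarrow>\<^sub>E {0..1::real}"
  have pairs: "closedin ?P {\<theta> \<in> topspace ?P. i \<le> j \<longrightarrow> j < k \<longrightarrow> \<theta> i \<le> \<theta> j}" for i j
  proof (cases "i \<le> j \<and> j < k")
    case True
    have "continuous_map ?P euclideanreal (\<lambda>\<theta>. \<theta> i - \<theta> j)"
      using True by (intro continuous_intros) auto
    then have "closedin ?P {\<theta> \<in> topspace ?P. \<theta> i - \<theta> j \<le> 0}"
      unfolding continuous_map_upper_lower_semicontinuous_le by blast
    then show ?thesis
      using True by simp
  qed (use closedin_topspace[of ?P] in auto)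
  have K: "compactin ?P ?K"
    by (simp add: compactin_PiE)
  then have "closedin ?P ?K"
    by (simp add: compactin_imp_closedin Hausdorff_space_product_topology)
  then have "closedin ?P (?K \<inter> (\<Inter>(i, j). {\<theta> \<in> topspace ?P. i \<le> j \<longrightarrow> j < k \<longrightarrow> \<theta> i \<le> \<theta> j}))"
    using pairs by (intro closedin_Int closedin_INT) (simp_all add: case_prod_beta)
  also have "?K \<inter> (\<Inter>(i, j). {\<theta> \<in> topspace ?P. i \<le> j \<longrightarrow> j < k \<longrightarrow> \<theta> i \<le> \<theta> j}) = ordered_simplex k"
    using PiE_mono[of "{..<k}" "\<lambda>_. {0..1::real}" "\<lambda>_. UNIV"] by (auto simp: ordered_simplex_def mono_on_def)
  finally have "closedin ?P (ordered_simplex k)" .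
  moreover have "ordered_simplex k \<subseteq> ?K"
    by (auto simp: ordered_simplex_def)
  ultimately have "compactin ?P (ordered_simplex k)"
    using closed_compactin[OF K] by blast
  then show ?thesis
    unfolding ordered_simplex_topology_def by (rule compact_space_subtopology)
qed

lemma quotient_map_collapse: "quotient_map (ordered_simplex_topology k) (collapsed_simplex k) (collapse k)"
  unfolding collapsed_simplex_def by (rule quotient_map_quotient_topology)

lemma continuous_map_collapse: "continuous_map (ordered_simplex_topology k) (collapsed_simplex k) (collapse k)"
  by (rule quotient_imp_continuous_map[OF quotient_map_collapse])

lemma topspace_collapsed_simplex [simp]: "topspace (collapsed_simplex k) = collapse k ` ordered_simplex k"
  by (simp add: collapsed_simplex_def)

lemma collapsed_vertex_in_topspace [simp]: "collapsed_vertex k \<in> topspace (collapsed_simplex k)"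
  unfolding topspace_collapsed_simplex collapsed_vertex_def by (intro imageI zero_in_ordered_simplex)

lemma tuple_code_decode:
  assumes "z \<in> topspace (collapsed_simplex k)"
  shows "tuple_code k (restrict (tuple_decode k z) {..<k}) = z"
  using assms by (auto simp: collapse_def)

lemma continuous_map_from_collapsed_simplex:
  assumes "continuous_map (ordered_simplex_topology k) Z g"
    and "\<And>\<theta>. \<theta> \<in> ordered_simplex k \<Longrightarrow> h (collapse k \<theta>) = g \<theta>"
  shows "continuous_map (collapsed_simplex k) Z h"
  unfolding collapsed_simplex_def using assms by (intro continuous_map_from_quotient_topology) auto

lemma compact_space_collapsed_simplex: "compact_space (collapsed_simplex k)"
  using image_compactin[OF compact_space_ordered_simplex_topology[unfolded compact_space_def] continuous_map_collapse]
  by (simp add: compact_space_def)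

lemma Hausdorff_space_collapsed_simplex: "Hausdorff_space (collapsed_simplex k)"
proof (rule Hausdorff_space_injective_preimage)
  show "Hausdorff_space (product_topology (\<lambda>_. euclidean :: complex topology) {..<k})"
    by (simp add: Hausdorff_space_product_topology)
  have "continuous_map (ordered_simplex_topology k) euclidean (\<lambda>\<theta>. cis (2 * pi * \<theta> i))" if "i < k" for i
    using continuous_map_compose[OF continuous_map_ordered_simplex_coordinate[OF that], of euclidean "\<lambda>t. cis (2 * pi * t)"]
    by (simp add: o_def continuous_intros)
  then show "continuous_map (collapsed_simplex k) (product_topology (\<lambda>_. euclidean) {..<k}) (tuple_decode k)"
    by (intro continuous_map_from_collapsed_simplex[where g = "\<lambda>\<theta>. \<lambda>i\<in>{..<k}. cis (2 * pi * \<theta> i)"])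
      (auto simp: continuous_map_componentwise)
  show "inj_on (tuple_decode k) (topspace (collapsed_simplex k))"
    by (intro inj_onI) (auto simp: collapse_def)
qed

lemma cgh_based_collapsed_simplex: "cgh_based (collapsed_simplex k) (collapsed_vertex k)"
  using collapsed_vertex_in_topspace[of k]
  by (simp add: cgh_based_def compact_imp_k_space compact_space_collapsed_simplex Hausdorff_space_collapsed_simplex)

lemma topspace_collapsed_simplex_0: "topspace (collapsed_simplex 0) = {collapsed_vertex 0}"
  using collapsed_vertex_in_topspace[of 0] collapse_vertex[of 0] by (auto simp: simplex_vertex_def)

lemma collapse_one: "collapse 1 \<theta> = cis (2 * pi * \<theta> 0)"
  by (simp add: collapse_def tuple_code_def)

lemma collapsed_vertex_one: "collapsed_vertex 1 = 1"
  unfolding collapsed_vertex_def collapse_one by simp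

lemma collapsed_simplex_one: "collapsed_simplex 1 = top_of_set (sphere 0 1)"
  unfolding collapsed_simplex_def
proof (intro quotient_topology_unique continuous_imp_quotient_map)
  show "continuous_map (ordered_simplex_topology 1) (top_of_set (sphere 0 1)) (collapse 1)"
    unfolding continuous_map_in_subtopology collapse_one
    using continuous_map_compose[OF continuous_map_ordered_simplex_coordinate[of 0 1], of euclidean "\<lambda>t. cis (2 * pi * t)"]
    by (auto simp: o_def continuous_intros)
  have "z \<in> collapse 1 ` ordered_simplex 1" if "norm z = 1" for z :: complex
  proof
    let ?\<theta> = "\<lambda>i\<in>{..<1::nat}. Arg2pi z / (2 * pi)"
    show "?\<theta> \<in> ordered_simplex 1"
      using Arg2pi[of z] by (intro ordered_simplexI) (auto simp: field_simps)
    show "z = collapse 1 ?\<theta>"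
      using that unfolding collapse_one by (simp add: cis_conv_exp complex_norm_eq_1_exp)
  qed
  moreover have "norm (collapse 1 \<theta>) = 1" for \<theta>
    unfolding collapse_one by simp
  ultimately show "collapse 1 ` topspace (ordered_simplex_topology 1) = topspace (top_of_set (sphere 0 1))"
    by auto
qed (simp_all add: compact_space_ordered_simplex_topology Hausdorff_space_subtopology)

lemma Delta_hom_less: "f \<in> Delta_hom m n \<Longrightarrow> i < m \<Longrightarrow> f i < n"
  by (auto simp: Delta_hom_def PiE_iff)

definition reindex :: "nat \<Rightarrow> nat \<Rightarrow> (nat \<Rightarrow> nat) \<Rightarrow> complex \<Rightarrow> complex" where
  "reindex m n f z = tuple_code m (\<lambda>i\<in>{..<m}. tuple_decode n z (f i))"

text \<open>In torus coordinates the padding value 1 = exp 0 = exp (2 pi i) realises both the front face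
  (t, 1, ..., 1) and the back face (0, ..., 0, t').\<close>
definition wedge_incl :: "nat \<Rightarrow> nat \<Rightarrow> complex + complex \<Rightarrow> complex" where
  "wedge_incl m n z = (case z of
      Inl x \<Rightarrow> tuple_code (m + n) (\<lambda>i\<in>{..<m + n}. if i < m then tuple_decode m x i else 1)
    | Inr y \<Rightarrow> tuple_code (m + n) (\<lambda>i\<in>{..<m + n}. if i < m then 1 else tuple_decode n y (i - m)))"

lemma wedge_incl_Inl:
  "wedge_incl m n (Inl x) = tuple_code (m + n) (\<lambda>i\<in>{..<m + n}. if i < m then tuple_decode m x i else 1)"
  by (simp add: wedge_incl_def)

lemma wedge_incl_Inr:
  "wedge_incl m n (Inr y) = tuple_code (m + n) (\<lambda>i\<in>{..<m + n}. if i < m then 1 else tuple_decode n y (i - m))"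
  by (simp add: wedge_incl_def)

lemma tuple_decode_reindex [simp]:
  "tuple_decode m (reindex m n f z) = (\<lambda>i\<in>{..<m}. tuple_decode n z (f i))"
  by (simp add: reindex_def)

lemma reindex_collapse:
  assumes "\<And>i. i < m \<Longrightarrow> f i < n"
  shows "reindex m n f (collapse n \<theta>) = collapse m (\<lambda>i\<in>{..<m}. \<theta> (f i))"
  unfolding reindex_def collapse_def[of m] using assms by (intro tuple_code_cong) simp

lemma reindex_collapsed_vertex:
  assumes "\<And>i. i < m \<Longrightarrow> f i < n"
  shows "reindex m n f (collapsed_vertex n) = collapsed_vertex m"
  unfolding collapsed_vertex_def using assms by (simp add: reindex_collapse cong: restrict_cong)

lemma reindex_Delta_id:
  assumes "z \<in> topspace (collapsed_simplex n)"
  shows "reindex n n (Delta_id n) z = z"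
  unfolding reindex_def using tuple_code_decode[OF assms] by (simp add: Delta_id_def cong: restrict_cong)

lemma reindex_Delta_comp:
  assumes "f \<in> Delta_hom l m" and "g \<in> Delta_hom m n"
  shows "reindex l n (Delta_comp l g f) z = reindex l m f (reindex m n g z)"
  unfolding reindex_def using Delta_hom_less[OF assms(1)]
  by (intro tuple_code_cong) (simp add: Delta_comp_def compose_def)

lemma continuous_map_reindex:
  assumes f: "f \<in> Delta_hom m n"
  shows "continuous_map (collapsed_simplex n) (collapsed_simplex m) (reindex m n f)"
proof (rule continuous_map_from_collapsed_simplex)
  let ?g = "\<lambda>\<theta>. \<lambda>i\<in>{..<m}. \<theta> (f i)"
  have "?g \<theta> \<in> ordered_simplex m" if "\<theta> \<in> ordered_simplex n" for \<theta>
    using that f Delta_hom_less[OF f] ordered_simplex_bounds ordered_simplex_mono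
    by (intro ordered_simplexI) (auto simp: Delta_hom_def mono_on_def)
  then have "continuous_map (ordered_simplex_topology n) (ordered_simplex_topology m) ?g"
    using Delta_hom_less[OF f]
    by (intro continuous_map_into_ordered_simplex_topology) (auto intro: continuous_map_ordered_simplex_coordinate)
  then show "continuous_map (ordered_simplex_topology n) (collapsed_simplex m) (collapse m \<circ> ?g)"
    using continuous_map_collapse by (rule continuous_map_compose)
qed (simp add: reindex_collapse Delta_hom_less[OF f])

lemma based_map_reindex:
  "f \<in> Delta_hom m n \<Longrightarrow>
    based_map (collapsed_simplex n) (collapsed_vertex n) (collapsed_simplex m) (collapsed_vertex m) (reindex m n f)"
  by (simp add: based_map_def continuous_map_reindex reindex_collapsed_vertex Delta_hom_less)

definition front_face :: "nat \<Rightarrow> nat \<Rightarrow> (nat \<Rightarrow> real) \<Rightarrow> nat \<Rightarrow> real" where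
  "front_face m n \<alpha> = (\<lambda>i\<in>{..<m + n}. if i < m then \<alpha> i else 1)"

definition back_face :: "nat \<Rightarrow> nat \<Rightarrow> (nat \<Rightarrow> real) \<Rightarrow> nat \<Rightarrow> real" where
  "back_face m n \<beta> = (\<lambda>i\<in>{..<m + n}. if i < m then 0 else \<beta> (i - m))"

lemma front_face_in_ordered_simplex: "\<alpha> \<in> ordered_simplex m \<Longrightarrow> front_face m n \<alpha> \<in> ordered_simplex (m + n)"
  using ordered_simplex_bounds ordered_simplex_mono
  by (intro ordered_simplexI) (auto simp: front_face_def)

lemma back_face_in_ordered_simplex: "\<beta> \<in> ordered_simplex n \<Longrightarrow> back_face m n \<beta> \<in> ordered_simplex (m + n)"
  using ordered_simplex_bounds ordered_simplex_mono[of \<beta> n "_ - m" "_ - m"]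
  by (intro ordered_simplexI) (auto simp: back_face_def)

lemma continuous_map_front_face:
  "continuous_map (ordered_simplex_topology m) (ordered_simplex_topology (m + n)) (front_face m n)"
  using front_face_in_ordered_simplex
  by (intro continuous_map_into_ordered_simplex_topology)
    (auto simp: front_face_def intro: continuous_map_ordered_simplex_coordinate)

lemma continuous_map_back_face:
  "continuous_map (ordered_simplex_topology n) (ordered_simplex_topology (m + n)) (back_face m n)"
  using back_face_in_ordered_simplex
  by (intro continuous_map_into_ordered_simplex_topology)
    (auto simp: back_face_def intro: continuous_map_ordered_simplex_coordinate)

lemma wedge_incl_Inl_collapse: "wedge_incl m n (Inl (collapse m \<alpha>)) = collapse (m + n) (front_face m n \<alpha>)"
  unfolding wedge_incl_Inl collapse_def[of "m + n"] by (intro tuple_code_cong) (simp add: front_face_def)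

lemma wedge_incl_Inr_collapse: "wedge_incl m n (Inr (collapse n \<beta>)) = collapse (m + n) (back_face m n \<beta>)"
  unfolding wedge_incl_Inr collapse_def[of "m + n"] by (intro tuple_code_cong) (auto simp: back_face_def)

lemma wedge_incl_collapsed_vertex: "wedge_incl m n (Inl (collapsed_vertex m)) = collapsed_vertex (m + n)"
  unfolding collapsed_vertex_def[of m] wedge_incl_Inl_collapse
  by (intro collapse_vertex) (auto simp: simplex_vertex_def front_face_def)

lemma wedge_incl_wedge_norm:
  "wedge_incl m n (wedge_norm (collapsed_vertex m) (collapsed_vertex n) (Inr y)) = wedge_incl m n (Inr y)"
proof -
  have "wedge_incl m n (Inl (collapsed_vertex m)) = wedge_incl m n (Inr (collapsed_vertex n))"
    unfolding collapsed_vertex_def wedge_incl_Inl_collapse wedge_incl_Inr_collapse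
    by (intro collapse_vertex[THEN trans, OF _ collapse_vertex[symmetric]])
      (auto simp: simplex_vertex_def front_face_def back_face_def)
  then show ?thesis
    by (simp add: wedge_norm_Inr)
qed

lemma continuous_map_wedge_incl:
  "continuous_map (wedge (collapsed_simplex m) (collapsed_vertex m) (collapsed_simplex n) (collapsed_vertex n))
     (collapsed_simplex (m + n)) (wedge_incl m n)"
proof (rule continuous_map_from_wedge[OF collapsed_vertex_in_topspace])
  show "continuous_map (collapsed_simplex m) (collapsed_simplex (m + n)) (\<lambda>x. wedge_incl m n (Inl x))"
    using continuous_map_compose[OF continuous_map_front_face continuous_map_collapse]
    by (rule continuous_map_from_collapsed_simplex) (simp add: wedge_incl_Inl_collapse)
  show "continuous_map (collapsed_simplex n) (collapsed_simplex (m + n))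
      (\<lambda>y. wedge_incl m n (wedge_norm (collapsed_vertex m) (collapsed_vertex n) (Inr y)))"
    using continuous_map_compose[OF continuous_map_back_face continuous_map_collapse]
    by (rule continuous_map_from_collapsed_simplex) (simp add: wedge_incl_wedge_norm wedge_incl_Inr_collapse)
qed

lemma based_map_wedge_incl:
  "based_map (wedge (collapsed_simplex m) (collapsed_vertex m) (collapsed_simplex n) (collapsed_vertex n))
     (Inl (collapsed_vertex m)) (collapsed_simplex (m + n)) (collapsed_vertex (m + n)) (wedge_incl m n)"
  by (simp add: based_map_def continuous_map_wedge_incl wedge_incl_collapsed_vertex)

lemma wedge_incl_natural:
  assumes f: "f \<in> Delta_hom m m'" and g: "g \<in> Delta_hom n n'"
  shows "reindex (m + n) (m' + n') (Delta_sum m n m' f g) (wedge_incl m' n' z) =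
    wedge_incl m n (wedge_map (collapsed_vertex m) (collapsed_vertex n) (reindex m m' f) (reindex n n' g) z)"
proof (cases z)
  case (Inl x)
  show ?thesis
    unfolding Inl reindex_def[of "m + n"] wedge_map_def map_sum.simps wedge_norm_Inl wedge_incl_Inl
    using Delta_hom_less[OF f] Delta_hom_less[OF g]
    by (intro tuple_code_cong) (auto simp: Delta_sum_def trans_less_add1)
next
  case (Inr y)
  show ?thesis
    unfolding Inr reindex_def[of "m + n"] wedge_map_def map_sum.simps wedge_incl_wedge_norm wedge_incl_Inr
    using Delta_hom_less[OF f] Delta_hom_less[OF g]
    by (intro tuple_code_cong) (auto simp: Delta_sum_def trans_less_add1)
qed

lemma wedge_incl_coassoc:
  "wedge_incl (l + m) n (wedge_map (collapsed_vertex (l + m)) (collapsed_vertex n) (wedge_incl l m) id z) =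
    wedge_incl l (m + n) (wedge_map (collapsed_vertex l) (collapsed_vertex (m + n)) id (wedge_incl m n) (wedge_assoc z))"
proof (cases z)
  case (Inl u)
  then show ?thesis
    by (cases u) (auto simp: wedge_map_def wedge_assoc_def wedge_incl_wedge_norm wedge_incl_Inl wedge_incl_Inr
        add.assoc intro!: tuple_code_cong)
next
  case (Inr w)
  then show ?thesis
    by (auto simp: wedge_map_def wedge_assoc_def wedge_incl_wedge_norm wedge_incl_Inr add.assoc
        intro!: tuple_code_cong)
qed

lemma wedge_incl_counit_left:
  assumes "x \<in> topspace (collapsed_simplex n)"
  shows "wedge_incl 0 n (wedge_norm (collapsed_vertex 0) (collapsed_vertex n) (Inr x)) = x"
  using tuple_code_decode[OF assms] by (simp add: wedge_incl_wedge_norm wedge_incl_Inr)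

lemma wedge_incl_counit_right:
  assumes "x \<in> topspace (collapsed_simplex n)"
  shows "wedge_incl n 0 (Inl x) = x"
proof -
  have "wedge_incl n 0 (Inl x) = tuple_code n (restrict (tuple_decode n x) {..<n})"
    unfolding wedge_incl_Inl add_0_right by (intro tuple_code_cong) simp
  also have "\<dots> = x"
    by (rule tuple_code_decode[OF assms])
  finally show ?thesis .
qed

section \<open>A homotopy inverse of the wedge inclusion\<close>

definition front_max :: "nat \<Rightarrow> (nat \<Rightarrow> real) \<Rightarrow> real" where
  "front_max m \<theta> = (if m = 0 then 0 else \<theta> (m - 1))"

definition back_min :: "nat \<Rightarrow> nat \<Rightarrow> (nat \<Rightarrow> real) \<Rightarrow> real" where
  "back_min m n \<theta> = (if n = 0 then 1 else \<theta> m)"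

definition push_distance :: "nat \<Rightarrow> nat \<Rightarrow> (nat \<Rightarrow> real) \<Rightarrow> real" where
  "push_distance m n \<theta> = min (front_max m \<theta>) (1 - back_min m n \<theta>)"

definition push :: "nat \<Rightarrow> nat \<Rightarrow> real \<Rightarrow> (nat \<Rightarrow> real) \<Rightarrow> nat \<Rightarrow> real" where
  "push m n t \<theta> = (\<lambda>i\<in>{..<m + n}.
     if i < m then max (\<theta> i - t * push_distance m n \<theta>) 0 else min (\<theta> i + t * push_distance m n \<theta>) 1)"

definition front_part :: "nat \<Rightarrow> nat \<Rightarrow> (nat \<Rightarrow> real) \<Rightarrow> nat \<Rightarrow> real" where
  "front_part m n \<theta> = (\<lambda>i\<in>{..<m}. push m n 1 \<theta> i)"

definition back_part :: "nat \<Rightarrow> nat \<Rightarrow> (nat \<Rightarrow> real) \<Rightarrow> nat \<Rightarrow> real" where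
  "back_part m n \<theta> = (\<lambda>j\<in>{..<n}. push m n 1 \<theta> (m + j))"

definition wedge_split :: "nat \<Rightarrow> nat \<Rightarrow> (nat \<Rightarrow> real) \<Rightarrow> complex + complex" where
  "wedge_split m n \<theta> =
     (if front_max m \<theta> \<le> 1 - back_min m n \<theta>
      then wedge_norm (collapsed_vertex m) (collapsed_vertex n) (Inr (collapse n (back_part m n \<theta>)))
      else Inl (collapse m (front_part m n \<theta>)))"

lemma front_max_bounds:
  assumes "\<theta> \<in> ordered_simplex (m + n)"
  shows "0 \<le> front_max m \<theta>" and "\<And>i. i < m \<Longrightarrow> \<theta> i \<le> front_max m \<theta>"
  using ordered_simplex_bounds[OF assms, of "m - 1"] ordered_simplex_mono[OF assms, of _ "m - 1"]
  by (auto simp: front_max_def)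

lemma back_min_bounds:
  assumes "\<theta> \<in> ordered_simplex (m + n)"
  shows "back_min m n \<theta> \<le> 1" and "\<And>i. m \<le> i \<Longrightarrow> i < m + n \<Longrightarrow> back_min m n \<theta> \<le> \<theta> i"
  using ordered_simplex_bounds[OF assms, of m] ordered_simplex_mono[OF assms, of m]
  by (auto simp: back_min_def)

lemma push_distance_nonneg: "\<theta> \<in> ordered_simplex (m + n) \<Longrightarrow> 0 \<le> push_distance m n \<theta>"
  using front_max_bounds(1) back_min_bounds(1) by (simp add: push_distance_def)

lemma push_distance_vertex:
  assumes "\<theta> \<in> ordered_simplex (m + n)" and "simplex_vertex (m + n) \<theta>"
  shows "push_distance m n \<theta> = 0"
proof -
  have "front_max m \<theta> \<in> {0, 1}" "back_min m n \<theta> \<in> {0, 1}"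
    using assms(2) by (auto simp: simplex_vertex_def front_max_def back_min_def)
  moreover have "front_max m \<theta> \<le> back_min m n \<theta>"
    using ordered_simplex_mono[OF assms(1), of "m - 1" m] ordered_simplex_bounds[OF assms(1), of m]
      ordered_simplex_bounds[OF assms(1), of "m - 1"]
    by (auto simp: front_max_def back_min_def)
  ultimately show ?thesis
    by (auto simp: push_distance_def)
qed

lemma push_in_ordered_simplex:
  assumes \<theta>: "\<theta> \<in> ordered_simplex (m + n)" and "0 \<le> t"
  shows "push m n t \<theta> \<in> ordered_simplex (m + n)"
proof (rule ordered_simplexI)
  have d: "0 \<le> t * push_distance m n \<theta>"
    using assms push_distance_nonneg[OF \<theta>] by simp
  show "0 \<le> push m n t \<theta> i \<and> push m n t \<theta> i \<le> 1" if "i < m + n" for i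
    using that d ordered_simplex_bounds[OF \<theta> that] by (auto simp: push_def)
  show "push m n t \<theta> i \<le> push m n t \<theta> j" if "i \<le> j" "j < m + n" for i j
    using that d ordered_simplex_mono[OF \<theta> that] ordered_simplex_bounds[OF \<theta>, of i] ordered_simplex_bounds[OF \<theta>, of j]
    by (auto simp: push_def)
qed (simp add: push_def)

lemma push_eq_self:
  assumes "\<theta> \<in> ordered_simplex (m + n)" and "t = 0 \<or> push_distance m n \<theta> = 0"
  shows "push m n t \<theta> = \<theta>"
  using assms ordered_simplex_bounds[OF assms(1)] ordered_simplex_extensional[OF assms(1)]
  by (intro extensionalityI[of _ "{..<m + n}"]) (auto simp: push_def)

lemma push_vertex:
  assumes "\<theta> \<in> ordered_simplex (m + n)" and "simplex_vertex (m + n) \<theta>"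
  shows "push m n t \<theta> = \<theta>"
  using push_eq_self[OF assms(1)] push_distance_vertex[OF assms] by simp

lemma front_part_in_ordered_simplex:
  assumes "\<theta> \<in> ordered_simplex (m + n)"
  shows "front_part m n \<theta> \<in> ordered_simplex m"
  using ordered_simplex_bounds[OF push_in_ordered_simplex[OF assms]] ordered_simplex_mono[OF push_in_ordered_simplex[OF assms]]
  by (intro ordered_simplexI) (auto simp: front_part_def)

lemma back_part_in_ordered_simplex:
  assumes "\<theta> \<in> ordered_simplex (m + n)"
  shows "back_part m n \<theta> \<in> ordered_simplex n"
  using ordered_simplex_bounds[OF push_in_ordered_simplex[OF assms]] ordered_simplex_mono[OF push_in_ordered_simplex[OF assms]]
  by (intro ordered_simplexI) (auto simp: back_part_def)

lemma collapse_push_one: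
  assumes \<theta>: "\<theta> \<in> ordered_simplex (m + n)"
  shows "collapse (m + n) (push m n 1 \<theta>) = wedge_incl m n (wedge_split m n \<theta>)"
proof (cases "front_max m \<theta> \<le> 1 - back_min m n \<theta>")
  case True
  then have "push m n 1 \<theta> = back_face m n (back_part m n \<theta>)"
    using front_max_bounds(2)[OF \<theta>] ordered_simplex_bounds[OF \<theta>]
    by (intro ext) (auto simp: push_def back_face_def back_part_def push_distance_def)
  with True show ?thesis
    by (simp add: wedge_split_def wedge_incl_wedge_norm wedge_incl_Inr_collapse)
next
  case False
  then have "push m n 1 \<theta> = front_face m n (front_part m n \<theta>)"
    using back_min_bounds(2)[OF \<theta>] ordered_simplex_bounds[OF \<theta>]
    by (intro ext) (auto simp: push_def front_face_def front_part_def push_distance_def)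
  with False show ?thesis
    by (simp add: wedge_split_def wedge_incl_Inl_collapse)
qed

lemma wedge_split_vertex:
  assumes \<theta>: "\<theta> \<in> ordered_simplex (m + n)" and "simplex_vertex (m + n) \<theta>"
  shows "wedge_split m n \<theta> = Inl (collapsed_vertex m)"
proof -
  have push: "push m n 1 \<theta> = \<theta>"
    by (rule push_vertex[OF assms])
  have "collapse m (front_part m n \<theta>) = collapsed_vertex m" "collapse n (back_part m n \<theta>) = collapsed_vertex n"
    using assms(2) by (auto intro!: collapse_vertex simp: simplex_vertex_def front_part_def back_part_def push)
  then show ?thesis
    by (simp add: wedge_split_def wedge_norm_Inr)
qed

lemma wedge_split_front_face:
  assumes \<alpha>: "\<alpha> \<in> ordered_simplex m"
  shows "wedge_split m n (front_face m n \<alpha>) = Inl (collapse m \<alpha>)"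
proof -
  let ?\<theta> = "front_face m n \<alpha>"
  have \<theta>: "?\<theta> \<in> ordered_simplex (m + n)"
    using front_face_in_ordered_simplex[OF \<alpha>] .
  have "back_min m n ?\<theta> = 1"
    by (simp add: back_min_def front_face_def)
  then have d: "push_distance m n ?\<theta> = 0"
    using front_max_bounds(1)[OF \<theta>] by (simp add: push_distance_def)
  show ?thesis
  proof (cases "front_max m ?\<theta> \<le> 1 - back_min m n ?\<theta>")
    case True
    then have vertex: "simplex_vertex (m + n) ?\<theta>"
      using front_max_bounds[OF \<theta>] ordered_simplex_bounds[OF \<alpha>] \<open>back_min m n ?\<theta> = 1\<close>
      by (force simp: simplex_vertex_def front_face_def)
    have "\<alpha> i \<in> {0, 1}" if "i < m" for i
      using vertex[unfolded simplex_vertex_def, rule_format, of i] that by (simp add: front_face_def)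
    then have "collapse m \<alpha> = collapsed_vertex m"
      by (intro collapse_vertex) (simp add: simplex_vertex_def)
    with wedge_split_vertex[OF \<theta> vertex] show ?thesis
      by simp
  next
    case False
    have "front_part m n ?\<theta> = \<alpha>"
      using push_eq_self[OF \<theta>] d ordered_simplex_extensional[OF \<alpha>]
      by (intro extensionalityI[of _ "{..<m}"]) (auto simp: front_part_def front_face_def)
    with False show ?thesis
      by (simp add: wedge_split_def)
  qed
qed

lemma wedge_split_back_face:
  assumes \<beta>: "\<beta> \<in> ordered_simplex n"
  shows "wedge_split m n (back_face m n \<beta>) = wedge_norm (collapsed_vertex m) (collapsed_vertex n) (Inr (collapse n \<beta>))"
proof -
  let ?\<theta> = "back_face m n \<beta>"
  have \<theta>: "?\<theta> \<in> ordered_simplex (m + n)"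
    using back_face_in_ordered_simplex[OF \<beta>] .
  have "front_max m ?\<theta> = 0"
    by (auto simp: front_max_def back_face_def)
  then have "push_distance m n ?\<theta> = 0" and split: "front_max m ?\<theta> \<le> 1 - back_min m n ?\<theta>"
    using back_min_bounds(1)[OF \<theta>] by (simp_all add: push_distance_def)
  then have "back_part m n ?\<theta> = \<beta>"
    using push_eq_self[OF \<theta>] ordered_simplex_extensional[OF \<beta>]
    by (intro extensionalityI[of _ "{..<n}"]) (auto simp: back_part_def back_face_def)
  with split show ?thesis
    by (simp add: wedge_split_def)
qed

lemma continuous_map_front_max: "continuous_map (ordered_simplex_topology (m + n)) euclideanreal (front_max m)"
  by (cases "m = 0") (simp_all add: front_max_def[abs_def] continuous_map_ordered_simplex_coordinate)

lemma continuous_map_back_min: "continuous_map (ordered_simplex_topology (m + n)) euclideanreal (back_min m n)"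
  by (cases "n = 0") (simp_all add: back_min_def[abs_def] continuous_map_ordered_simplex_coordinate)

lemma continuous_map_push_distance:
  "continuous_map (ordered_simplex_topology (m + n)) euclideanreal (push_distance m n)"
  using continuous_map_front_max continuous_map_back_min
  unfolding push_distance_def[abs_def] by (intro continuous_intros)

lemma continuous_map_push:
  "continuous_map (prod_topology (top_of_set {0..1}) (ordered_simplex_topology (m + n)))
     (ordered_simplex_topology (m + n)) (\<lambda>(t, \<theta>). push m n t \<theta>)"
proof (rule continuous_map_into_ordered_simplex_topology)
  let ?X = "prod_topology (top_of_set {0..1::real}) (ordered_simplex_topology (m + n))"
  show "(case p of (t, \<theta>) \<Rightarrow> push m n t \<theta>) \<in> ordered_simplex (m + n)" if "p \<in> topspace ?X" for p
    using that push_in_ordered_simplex by auto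
  fix i
  assume "i < m + n"
  have "continuous_map ?X euclideanreal fst"
    using continuous_map_compose[OF continuous_map_fst continuous_map_from_subtopology[OF continuous_map_id]]
    by (simp add: o_def)
  moreover have "continuous_map ?X euclideanreal (\<lambda>p. snd p i)"
    using continuous_map_compose[OF continuous_map_snd continuous_map_ordered_simplex_coordinate[OF \<open>i < m + n\<close>]]
    by (simp add: o_def)
  moreover have "continuous_map ?X euclideanreal (\<lambda>p. push_distance m n (snd p))"
    using continuous_map_compose[OF continuous_map_snd continuous_map_push_distance] by (simp add: o_def)
  ultimately show "continuous_map ?X euclideanreal (\<lambda>p. (case p of (t, \<theta>) \<Rightarrow> push m n t \<theta>) i)"
    using \<open>i < m + n\<close> unfolding push_def case_prod_beta
    by (cases "i < m") (simp_all add: continuous_intros)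
qed

lemma continuous_map_front_part:
  "continuous_map (ordered_simplex_topology (m + n)) (ordered_simplex_topology m) (front_part m n)"
  using front_part_in_ordered_simplex
  by (intro continuous_map_into_ordered_simplex_topology)
    (auto simp: front_part_def push_def intro!: continuous_intros continuous_map_push_distance
      continuous_map_ordered_simplex_coordinate)

lemma continuous_map_back_part:
  "continuous_map (ordered_simplex_topology (m + n)) (ordered_simplex_topology n) (back_part m n)"
  using back_part_in_ordered_simplex
  by (intro continuous_map_into_ordered_simplex_topology)
    (auto simp: back_part_def push_def intro!: continuous_intros continuous_map_push_distance
      continuous_map_ordered_simplex_coordinate)

lemma continuous_map_wedge_split:
  "continuous_map (ordered_simplex_topology (m + n))
     (wedge (collapsed_simplex m) (collapsed_vertex m) (collapsed_simplex n) (collapsed_vertex n)) (wedge_split m n)"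
  (is "continuous_map ?S ?W _")
  unfolding wedge_split_def
proof (rule continuous_map_cases_le)
  show "continuous_map ?S euclideanreal (front_max m)"
    by (rule continuous_map_front_max)
  show "continuous_map ?S euclideanreal (\<lambda>\<theta>. 1 - back_min m n \<theta>)"
    using continuous_map_back_min by (intro continuous_intros)
  show "continuous_map (subtopology ?S {\<theta> \<in> topspace ?S. front_max m \<theta> \<le> 1 - back_min m n \<theta>}) ?W
      (\<lambda>\<theta>. wedge_norm (collapsed_vertex m) (collapsed_vertex n) (Inr (collapse n (back_part m n \<theta>))))"
    using continuous_map_compose[OF continuous_map_compose[OF continuous_map_back_part continuous_map_collapse]
        continuous_map_Inr_wedge[OF collapsed_vertex_in_topspace]]
    by (intro continuous_map_from_subtopology) (simp add: o_def)
  show "continuous_map (subtopology ?S {\<theta> \<in> topspace ?S. 1 - back_min m n \<theta> \<le> front_max m \<theta>}) ?W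
      (\<lambda>\<theta>. Inl (collapse m (front_part m n \<theta>)))"
    using continuous_map_compose[OF continuous_map_compose[OF continuous_map_front_part continuous_map_collapse]
        continuous_map_Inl_wedge[OF collapsed_vertex_in_topspace]]
    by (intro continuous_map_from_subtopology) (simp add: o_def)
next
  fix \<theta>
  assume \<theta>: "\<theta> \<in> topspace ?S" and eq: "front_max m \<theta> = 1 - back_min m n \<theta>"
  then have "push_distance m n \<theta> = front_max m \<theta>"
    by (simp add: push_distance_def)
  then have "simplex_vertex m (front_part m n \<theta>)" "simplex_vertex n (back_part m n \<theta>)"
    using \<theta> eq front_max_bounds(2)[of \<theta> m n] back_min_bounds(2)[of \<theta> m n] ordered_simplex_bounds[of \<theta> "m + n"]
    by (auto simp: simplex_vertex_def front_part_def back_part_def push_def)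
  then show "wedge_norm (collapsed_vertex m) (collapsed_vertex n) (Inr (collapse n (back_part m n \<theta>))) =
      Inl (collapse m (front_part m n \<theta>))"
    by (simp add: collapse_vertex wedge_norm_Inr)
qed

lemma wedge_split_respects_collapse:
  assumes "\<theta> \<in> ordered_simplex (m + n)" "\<theta>' \<in> ordered_simplex (m + n)"
    and "collapse (m + n) \<theta> = collapse (m + n) \<theta>'"
  shows "wedge_split m n \<theta> = wedge_split m n \<theta>'"
  using collapse_eq_cases[OF assms] wedge_split_vertex assms by auto

lemma wedge_retraction_exists:
  obtains r where "based_map (collapsed_simplex (m + n)) (collapsed_vertex (m + n))
      (wedge (collapsed_simplex m) (collapsed_vertex m) (collapsed_simplex n) (collapsed_vertex n))
      (Inl (collapsed_vertex m)) r"
    and "\<And>\<theta>. \<theta> \<in> ordered_simplex (m + n) \<Longrightarrow> r (collapse (m + n) \<theta>) = wedge_split m n \<theta>"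
proof -
  obtain r where r: "continuous_map (collapsed_simplex (m + n))
      (wedge (collapsed_simplex m) (collapsed_vertex m) (collapsed_simplex n) (collapsed_vertex n)) r"
    and r_collapse: "\<And>\<theta>. \<theta> \<in> topspace (ordered_simplex_topology (m + n)) \<Longrightarrow>
      r (collapse (m + n) \<theta>) = wedge_split m n \<theta>"
  proof (rule quotient_map_lift_exists[OF quotient_map_collapse continuous_map_wedge_split])
    show "wedge_split m n \<theta> = wedge_split m n \<theta>'"
      if "\<theta> \<in> topspace (ordered_simplex_topology (m + n))" "\<theta>' \<in> topspace (ordered_simplex_topology (m + n))"
        and "collapse (m + n) \<theta> = collapse (m + n) \<theta>'" for \<theta> \<theta>'
      using that by (intro wedge_split_respects_collapse) simp_all
  qed blast
  moreover have "r (collapsed_vertex (m + n)) = Inl (collapsed_vertex m)"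
    using r_collapse[of "\<lambda>i\<in>{..<m + n}. 0"] wedge_split_vertex[OF zero_in_ordered_simplex] zero_in_ordered_simplex
    by (simp add: collapsed_vertex_def simplex_vertex_def)
  ultimately show ?thesis
    using that by (simp add: based_map_def)
qed

lemma wedge_retraction_left_inverse:
  assumes r_collapse: "\<And>\<theta>. \<theta> \<in> ordered_simplex (m + n) \<Longrightarrow> r (collapse (m + n) \<theta>) = wedge_split m n \<theta>"
    and z: "z \<in> topspace (wedge (collapsed_simplex m) (collapsed_vertex m) (collapsed_simplex n) (collapsed_vertex n))"
  shows "r (wedge_incl m n z) = z"
proof (cases z)
  case (Inl x)
  with z obtain \<alpha> where "\<alpha> \<in> ordered_simplex m" "x = collapse m \<alpha>"
    by (auto simp: topspace_wedge[OF collapsed_vertex_in_topspace] wedge_carrier_def)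
  then show ?thesis
    using Inl by (simp add: wedge_incl_Inl_collapse r_collapse front_face_in_ordered_simplex wedge_split_front_face)
next
  case (Inr y)
  with z obtain \<beta> where "\<beta> \<in> ordered_simplex n" "y = collapse n \<beta>" "y \<noteq> collapsed_vertex n"
    by (auto simp: topspace_wedge[OF collapsed_vertex_in_topspace] wedge_carrier_def)
  then show ?thesis
    using Inr by (simp add: wedge_incl_Inr_collapse r_collapse back_face_in_ordered_simplex wedge_split_back_face
        wedge_norm_Inr)
qed

lemma wedge_retraction_homotopic_id:
  assumes r_collapse: "\<And>\<theta>. \<theta> \<in> ordered_simplex (m + n) \<Longrightarrow> r (collapse (m + n) \<theta>) = wedge_split m n \<theta>"
  shows "based_homotopic (collapsed_simplex (m + n)) (collapsed_vertex (m + n))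
    (collapsed_simplex (m + n)) (collapsed_vertex (m + n)) (wedge_incl m n \<circ> r) id"
proof -
  let ?S = "ordered_simplex_topology (m + n)"
  have "based_homotopic (collapsed_simplex (m + n)) (collapsed_vertex (m + n))
      (collapsed_simplex (m + n)) (collapsed_vertex (m + n)) id (wedge_incl m n \<circ> r)"
  proof (rule based_homotopic_quotient_lift[OF quotient_map_collapse collapsed_vertex_in_topspace])
    show "continuous_map (prod_topology (top_of_set {0..1}) ?S) (collapsed_simplex (m + n))
        (\<lambda>p. collapse (m + n) (push m n (fst p) (snd p)))"
      using continuous_map_compose[OF continuous_map_push continuous_map_collapse]
      by (simp add: o_def case_prod_beta)
    show "collapse (m + n) (push m n (fst (t, \<theta>)) (snd (t, \<theta>))) =
        collapse (m + n) (push m n (fst (t, \<theta>')) (snd (t, \<theta>')))"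
      if "\<theta> \<in> topspace ?S" "\<theta>' \<in> topspace ?S" "collapse (m + n) \<theta> = collapse (m + n) \<theta>'" for t \<theta> \<theta>'
      using that collapse_eq_cases[of \<theta> "m + n" \<theta>'] push_vertex[of \<theta> m n t] push_vertex[of \<theta>' m n t] by auto
    show "collapse (m + n) (push m n (fst (t, \<theta>)) (snd (t, \<theta>))) = collapsed_vertex (m + n)"
      if "\<theta> \<in> topspace ?S" "collapse (m + n) \<theta> = collapsed_vertex (m + n)" for t \<theta>
      using that collapse_eq_collapsed_vertexD[of \<theta> "m + n"] push_vertex[of \<theta> m n t] by auto
  qed (auto simp: push_eq_self collapse_push_one r_collapse)
  then show ?thesis
    by (simp add: based_homotopic_def homotopic_with_sym)
qed

lemma based_homotopy_equivalence_wedge_incl: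
  "based_homotopy_equivalence
     (wedge (collapsed_simplex m) (collapsed_vertex m) (collapsed_simplex n) (collapsed_vertex n)) (Inl (collapsed_vertex m))
     (collapsed_simplex (m + n)) (collapsed_vertex (m + n)) (wedge_incl m n)"
proof -
  obtain r where r: "based_map (collapsed_simplex (m + n)) (collapsed_vertex (m + n))
      (wedge (collapsed_simplex m) (collapsed_vertex m) (collapsed_simplex n) (collapsed_vertex n))
      (Inl (collapsed_vertex m)) r"
    and r_collapse: "\<And>\<theta>. \<theta> \<in> ordered_simplex (m + n) \<Longrightarrow> r (collapse (m + n) \<theta>) = wedge_split m n \<theta>"
    using wedge_retraction_exists[where m = m and n = n] by metis
  show ?thesis
  proof (rule based_homotopy_equivalence_retraction[OF based_map_wedge_incl r])
    show "r (wedge_incl m n z) = z"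
      if "z \<in> topspace (wedge (collapsed_simplex m) (collapsed_vertex m) (collapsed_simplex n) (collapsed_vertex n))"
      for z
      by (rule wedge_retraction_left_inverse[OF r_collapse that])
  qed (rule wedge_retraction_homotopic_id[OF r_collapse])
qed

theorem lemma3p2p2:
  shows "\<exists>(W :: nat \<Rightarrow> complex topology) bp Wm om.
           homotopy_monoid_Topop W bp Wm om \<and>
           W 1 = top_of_set (sphere 0 1) \<and> bp 1 = 1"
proof (intro exI conjI)
  show "homotopy_monoid_Topop collapsed_simplex collapsed_vertex reindex wedge_incl"
    unfolding homotopy_monoid_Topop_def
    by (intro conjI allI impI ballI cgh_based_collapsed_simplex based_map_reindex reindex_Delta_id
        reindex_Delta_comp based_map_wedge_incl wedge_incl_natural wedge_incl_coassoc wedge_incl_counit_left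
        wedge_incl_counit_right based_homotopy_equivalence_one_point topspace_collapsed_simplex_0
        based_homotopy_equivalence_wedge_incl)
      assumption+
  show "collapsed_simplex 1 = top_of_set (sphere 0 1)"
    by (rule collapsed_simplex_one)
  show "collapsed_vertex 1 = 1"
    by (rule collapsed_vertex_one)
qed

end
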